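(* Let $P$ and $Q$ be probability distributions on a nonempty set $\mathcal{X}\subseteq\mathbb{R}^d$, let $c\in(0,1)$, and let $h:\mathcal{X}\to\mathbb{R}$ be a fixed measurable function with $\mathbb{E}_{X\sim P}[h(X)^2]<\infty$, $\mathbb{E}_{Y\sim Q}[h(Y)^2]<\infty$ and $\sigma_c(h)>0$. For $\gamma,\nu\in\mathbb{R}$ consider the linearly transformed function $\gamma h+\nu$, and let $(\gamma^*,\nu^* )$ be the minimum of the quadratic function $(\gamma,\nu)\mapsto L_{P,Q,c}(\gamma h+\nu)$. Then $$L_{P,Q,c}(\gamma^* h+\nu^* )=\frac{c(1-c)}{1+\mathrm{SNR}(h)^2}.$$
   Context: For a measurable $h:\mathcal{X}\to\mathbb{R}$ with finite second moments under $P$ and $Q$, define: the mean discrepancy $\tau(P,Q\mid h)=\mathbb{E}_{X\sim P}[h(X)]-\mathbb{E}_{Y\sim Q}[h(Y)]$; the variance term $\sigma_c^2(h)=\dfrac{(1-c)\,\mathrm{Var}_{X\sim P}[h(X)]+c\,\mathrm{Var}_{Y\sim Q}[h(Y)]}{c(1-c)}$ with $\sigma_c(h)\ge 0$ its square root; the signal-to-noise ratio $\mathrm{SNR}(h)=\tau(P,Q\mid h)/\sigma_c(h)$ (defined when $\sigma_c(h)>0$); and the weighted squared loss $L_{P,Q,c}(h)=(1-c)\,\mathbb{E}_{X\sim P}[(1-h(X))^2]+c\,\mathbb{E}_{Y\sim Q}[h(Y)^2]$. *)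

theory Defs
  imports "HOL-Probability.Probability"
begin

definition mean_disc :: "'a measure \<Rightarrow> 'a measure \<Rightarrow> ('a \<Rightarrow> real) \<Rightarrow> real" where
  "mean_disc P Q h = (\<integral>x. h x \<partial>P) - (\<integral>y. h y \<partial>Q)"

definition sigma_sq :: "real \<Rightarrow> 'a measure \<Rightarrow> 'a measure \<Rightarrow> ('a \<Rightarrow> real) \<Rightarrow> real" where
  "sigma_sq c P Q h =
     ((1 - c) * prob_space.variance P h + c * prob_space.variance Q h) / (c * (1 - c))"

definition sigma_c :: "real \<Rightarrow> 'a measure \<Rightarrow> 'a measure \<Rightarrow> ('a \<Rightarrow> real) \<Rightarrow> real" where
  "sigma_c c P Q h = sqrt (sigma_sq c P Q h)"

definition SNR :: "real \<Rightarrow> 'a measure \<Rightarrow> 'a measure \<Rightarrow> ('a \<Rightarrow> real) \<Rightarrow> real" where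
  "SNR c P Q h = mean_disc P Q h / sigma_c c P Q h"

definition wloss :: "real \<Rightarrow> 'a measure \<Rightarrow> 'a measure \<Rightarrow> ('a \<Rightarrow> real) \<Rightarrow> real" where
  "wloss c P Q h = (1 - c) * (\<integral>x. (1 - h x)^2 \<partial>P) + c * (\<integral>y. (h y)^2 \<partial>Q)"

end

theory Submission
  imports Defs
begin

text \<open>By the bias-variance decomposition, the loss of \<open>g h + n\<close> splits into
  \<open>c(1-c)((1 - g \<tau>)\<^sup>2 + g\<^sup>2 \<sigma>\<^sup>2)\<close>, with \<open>\<tau>\<close> the mean discrepancy and \<open>\<sigma>\<^sup>2\<close> the variance term,
  plus a square in \<open>n\<close> that vanishes for the optimal offset.  The remaining one-dimensional
  ridge problem in \<open>g\<close> has minimum \<open>\<sigma>\<^sup>2/(\<tau>\<^sup>2 + \<sigma>\<^sup>2) = 1/(1 + SNR\<^sup>2)\<close>.\<close>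

lemma (in prob_space) integral_affine_square:
  fixes f :: "'a \<Rightarrow> real"
  assumes "integrable M f" "integrable M (\<lambda>x. (f x)^2)"
  shows "(\<integral>x. (a + b * f x)^2 \<partial>M) = b^2 * variance f + (a + b * expectation f)^2"
proof -
  have "(\<lambda>x. (a + b * f x)^2) = (\<lambda>x. a^2 + ((2*a*b) * f x + b^2 * (f x)^2))"
    by (auto simp: power2_eq_square algebra_simps)
  then have "(\<integral>x. (a + b * f x)^2 \<partial>M) = a^2 + 2*a*b * expectation f + b^2 * expectation (\<lambda>x. (f x)^2)"
    using assms by (simp add: prob_space)
  then show ?thesis
    unfolding variance_eq[OF assms] by (simp add: power2_eq_square algebra_simps)
qed

lemma weighted_squares_split:
  fixes c u w n :: real
  shows "(1-c)*(u-n)^2 + c*(n+w)^2 = c*(1-c)*(u+w)^2 + (n - ((1-c)*u - c*w))^2"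
  by (simp add: power2_eq_square algebra_simps)

lemma wloss_affine_eq:
  assumes "prob_space P" "prob_space Q"
    and "integrable P h" "integrable P (\<lambda>x. (h x)^2)"
    and "integrable Q h" "integrable Q (\<lambda>x. (h x)^2)"
    and "c \<noteq> 0" "c \<noteq> 1"
  shows "wloss c P Q (\<lambda>x. g * h x + n)
    = c*(1-c) * ((1 - g * mean_disc P Q h)^2 + g^2 * sigma_sq c P Q h)
      + (n - ((1-c)*(1 - g * (\<integral>x. h x \<partial>P)) - c * (g * (\<integral>x. h x \<partial>Q))))^2"
proof -
  interpret P: prob_space P by fact
  interpret Q: prob_space Q by fact
  define a where "a = (\<integral>x. h x \<partial>P)"
  define b where "b = (\<integral>x. h x \<partial>Q)"
  define vP where "vP = P.variance h"
  define vQ where "vQ = Q.variance h"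
  have affine_P: "(\<lambda>x. (1 - (g * h x + n))^2) = (\<lambda>x. ((1-n) + (-g) * h x)^2)"
    and affine_Q: "(\<lambda>x. (g * h x + n)^2) = (\<lambda>x. (n + g * h x)^2)"
    by (auto simp: algebra_simps)
  have "wloss c P Q (\<lambda>x. g * h x + n)
      = (1-c) * (g^2 * vP + ((1 - g*a) - n)^2) + c * (g^2 * vQ + (n + g*b)^2)"
    unfolding wloss_def affine_P affine_Q
      P.integral_affine_square[OF assms(3,4)] Q.integral_affine_square[OF assms(5,6)]
    by (simp add: a_def b_def vP_def vQ_def algebra_simps)
  also have "\<dots> = g^2 * ((1-c) * vP + c * vQ) + ((1-c)*((1 - g*a) - n)^2 + c*(n + g*b)^2)"
    by (simp add: algebra_simps)
  also have "(1-c) * vP + c * vQ = c*(1-c) * sigma_sq c P Q h"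
    using assms(7,8) by (simp add: sigma_sq_def vP_def vQ_def)
  finally show ?thesis
    unfolding weighted_squares_split mean_disc_def a_def[symmetric] b_def[symmetric]
    by (simp add: power2_eq_square algebra_simps)
qed

lemma ridge_quadratic_eq:
  fixes t V g :: real
  assumes "V > 0"
  shows "(1 - g*t)^2 + g^2*V = (t^2+V) * (g - t/(t^2+V))^2 + V/(t^2+V)"
proof -
  define D where "D = t^2 + V"
  have "D \<noteq> 0"
    using assms unfolding D_def by (metis add_nonneg_pos less_irrefl zero_le_power2)
  then have "D * (g - t/D)^2 + V/D = D*g^2 - 2*g*t + (t^2 + V)/D"
    by (simp add: power2_eq_square field_simps)
  also have "\<dots> = (1 - g*t)^2 + g^2*V"
    using \<open>D \<noteq> 0\<close> unfolding D_def by (simp add: power2_eq_square algebra_simps)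
  finally show ?thesis
    unfolding D_def by simp
qed

lemma ridge_quadratic_ge:
  fixes t V g :: real
  assumes "V > 0"
  shows "V/(t^2+V) \<le> (1 - g*t)^2 + g^2*V"
  unfolding ridge_quadratic_eq[OF assms]
  using assms by (simp add: add_nonneg_pos)

lemma ridge_quadratic_min:
  fixes t V :: real
  assumes "V > 0"
  shows "(1 - t/(t^2+V) * t)^2 + (t/(t^2+V))^2 * V = V/(t^2+V)"
  unfolding ridge_quadratic_eq[OF assms] by simp

theorem lemma1:
  fixes X :: "(real ^ 'd) set"
    and P Q :: "(real ^ 'd) measure"
    and h :: "real ^ 'd \<Rightarrow> real"
    and c :: real
  assumes "X \<noteq> {}"
    and "prob_space P" and "prob_space Q"
    and "sets P = sets (restrict_space borel X)"
    and "sets Q = sets (restrict_space borel X)"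
    and "c \<in> {0<..<1}"
    and "h \<in> borel_measurable (restrict_space borel X)"
    and "integrable P (\<lambda>x. (h x)^2)" and "integrable Q (\<lambda>y. (h y)^2)"
    and "sigma_c c P Q h > 0"
  shows "(\<exists>g n. \<forall>g' n'. wloss c P Q (\<lambda>x. g * h x + n) \<le> wloss c P Q (\<lambda>x. g' * h x + n'))
       \<and> (\<forall>g n. (\<forall>g' n'. wloss c P Q (\<lambda>x. g * h x + n) \<le> wloss c P Q (\<lambda>x. g' * h x + n'))
            \<longrightarrow> wloss c P Q (\<lambda>x. g * h x + n) = c * (1 - c) / (1 + (SNR c P Q h)^2))"
proof -
  define \<tau> where "\<tau> = mean_disc P Q h"
  define V where "V = sigma_sq c P Q h"
  define m where "m = c*(1-c) * (V/(\<tau>^2+V))"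
  have c: "0 < c" "c < 1" using assms(6) by auto
  have V: "V > 0" using assms(10) by (simp add: V_def sigma_c_def)
  interpret P: prob_space P by fact
  interpret Q: prob_space Q by fact
  have "h \<in> borel_measurable P" "h \<in> borel_measurable Q"
    using assms(4,5,7) measurable_cong_sets by blast+
  then have "integrable P h" "integrable Q h"
    using assms(8,9) P.square_integrable_imp_integrable Q.square_integrable_imp_integrable by blast+
  have "c \<noteq> 0" "c \<noteq> 1" using c by auto
  note loss = wloss_affine_eq[OF assms(2,3) \<open>integrable P h\<close> assms(8) \<open>integrable Q h\<close> assms(9)
      this, folded \<tau>_def V_def]
  have lower: "m \<le> wloss c P Q (\<lambda>x. g * h x + n)" for g n
  proof -
    have "m \<le> c*(1-c) * ((1 - g*\<tau>)^2 + g^2*V)"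
      unfolding m_def using ridge_quadratic_ge[OF V] c by (intro mult_left_mono) auto
    then show ?thesis
      unfolding loss by (simp add: add_increasing2)
  qed
  define g0 where "g0 = \<tau>/(\<tau>^2+V)"
  define n0 where "n0 = (1-c)*(1 - g0 * (\<integral>x. h x \<partial>P)) - c * (g0 * (\<integral>x. h x \<partial>Q))"
  have attained: "wloss c P Q (\<lambda>x. g0 * h x + n0) = m"
    unfolding loss n0_def g0_def m_def using ridge_quadratic_min[OF V, of \<tau>] by simp
  have "m = c*(1-c) / (1 + (SNR c P Q h)^2)"
    using V unfolding m_def SNR_def sigma_c_def
    by (simp add: \<tau>_def[symmetric] V_def[symmetric] power_divide field_simps add_nonneg_pos)
  then show ?thesis
    using lower attained by (metis order_antisym)
qed

end
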